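(* Let $P$ be a continuous poset and $(T_\varepsilon)_{\varepsilon\ge0}$ a superlinear family of Scott-continuous translations on $P$ satisfying TR2. Then $d_a(M,\underline M)=0$ and $d_a(M,\overline M)=0$ for every persistence module $M$ over $P$. In particular $d_a(M,0)=0$ whenever $M$ is ephemeral.
   Context: Let $P$ be a poset (as a category, $p\to q$ iff $p\le q$). A subset is directed if nonempty and any two elements have an upper bound in it. $x\ll y$ means: for every directed $D$ whose supremum exists with $y\le\sup D$, some $d\in D$ satisfies $x\le d$. $P$ is continuous if for each $p$ the set $\{x:x\ll p\}$ is directed with supremum $p$. A map $f\colon P\to P$ is Scott-continuous if it is order-preserving and $f(\sup D)=\sup f(D)$ for every directed $D$ whose supremum exists. A translation is an order-preserving $T\colon P\to P$ with $p\le T(p)$ for all $p$. A family $(T_\varepsilon)_{\varepsilon\ge0}$ of translations is superlinear if $T_\varepsilon(T_\delta(p))\le T_{\varepsilon+\delta}(p)$ for all $p$ and $\varepsilon,\delta\ge0$. TR2: $x\ll T_\varepsilon(x)$ for all $x\in P$ and $\varepsilon>0$. $k$ is a commutative ring with unity; persistence modules are functors $M$ from $P$ to $k$-modules. For a translation $T$, $T^*M=M\circ T$, with natural morphism $M\to T^*M$ given by $M(p\le T(p))$. Persistence modules $M,N$ are $\varepsilon$-interleaved if there are morphisms $f\colon M\to T_\varepsilon^*N$, $g\colon N\to T_\varepsilon^*M$ with $T_\varepsilon^*(g)\circ f$ equal to the natural morphism $M\to T_\varepsilon^*T_\varepsilon^*M$ and $T_\varepsilon^*(f)\circ g$ equal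 to the natural morphism $N\to T_\varepsilon^*T_\varepsilon^*N$. $d_a(M,N)$ is the infimum of $\varepsilon\ge0$ for which $M,N$ are $\varepsilon$-interleaved ($\infty$ if none). $\underline M_p=\varprojlim_{x\gg p}M_x$, $\overline M_p=\varinjlim_{x\ll p}M_x$. $M$ is ephemeral if $M(p\le q)=0$ for all $p\ll q$. *)

theory Defs
  imports "HOL-Algebra.Algebra" "HOL-Library.Extended_Real"
begin

definition is_sup :: "'p::order set \<Rightarrow> 'p \<Rightarrow> bool" where
  "is_sup D s \<longleftrightarrow> (\<forall>d\<in>D. d \<le> s) \<and> (\<forall>u. (\<forall>d\<in>D. d \<le> u) \<longrightarrow> s \<le> u)"

definition directed :: "'p::order set \<Rightarrow> bool" where
  "directed D \<longleftrightarrow> D \<noteq> {} \<and> (\<forall>a\<in>D. \<forall>b\<in>D. \<exists>c\<in>D. a \<le> c \<and> b \<le> c)"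

definition way_below :: "'p::order \<Rightarrow> 'p \<Rightarrow> bool" (infix \<open>\<lless>\<close> 50) where
  "x \<lless> y \<longleftrightarrow> (\<forall>D s. directed D \<longrightarrow> is_sup D s \<longrightarrow> y \<le> s \<longrightarrow> (\<exists>d\<in>D. x \<le> d))"

definition continuous_poset :: "'p::order itself \<Rightarrow> bool" where
  "continuous_poset TYPE('p) \<longleftrightarrow>
     (\<forall>p::'p. directed {x. x \<lless> p} \<and> is_sup {x. x \<lless> p} p)"

definition scott_continuous :: "('p::order \<Rightarrow> 'p) \<Rightarrow> bool" where
  "scott_continuous f \<longleftrightarrow> mono f \<and>
     (\<forall>D s. directed D \<longrightarrow> is_sup D s \<longrightarrow> is_sup (f ` D) (f s))"

definition translation :: "('p::order \<Rightarrow> 'p) \<Rightarrow> bool" where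
  "translation T \<longleftrightarrow> mono T \<and> (\<forall>p. p \<le> T p)"

definition superlinear :: "(real \<Rightarrow> 'p::order \<Rightarrow> 'p) \<Rightarrow> bool" where
  "superlinear T \<longleftrightarrow> (\<forall>\<epsilon> \<delta> p. \<epsilon> \<ge> 0 \<longrightarrow> \<delta> \<ge> 0 \<longrightarrow> T \<epsilon> (T \<delta> p) \<le> T (\<epsilon> + \<delta>) p)"

definition TR2 :: "(real \<Rightarrow> 'p::order \<Rightarrow> 'p) \<Rightarrow> bool" where
  "TR2 T \<longleftrightarrow> (\<forall>\<epsilon> x. \<epsilon> > 0 \<longrightarrow> x \<lless> T \<epsilon> x)"

text \<open>A persistence module over the poset 'p with values in R-modules is a pair
  (F, phi): F p is an R-module (HOL-Algebra record, element type 'm) and phi p q is the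
  structure map M(p \<le> q). Maps are only relevant on carriers.\<close>

type_synonym ('p, 'k, 'm) pmod = "('p \<Rightarrow> ('k, 'm) module) \<times> ('p \<Rightarrow> 'p \<Rightarrow> 'm \<Rightarrow> 'm)"

definition linear_map :: "'k ring \<Rightarrow> ('k, 'a) module \<Rightarrow> ('k, 'b) module \<Rightarrow> ('a \<Rightarrow> 'b) \<Rightarrow> bool" where
  "linear_map R A B f \<longleftrightarrow>
     f \<in> carrier A \<rightarrow> carrier B \<and>
     (\<forall>x\<in>carrier A. \<forall>y\<in>carrier A. f (x \<oplus>\<^bsub>A\<^esub> y) = f x \<oplus>\<^bsub>B\<^esub> f y) \<and>
     (\<forall>c\<in>carrier R. \<forall>x\<in>carrier A. f (c \<odot>\<^bsub>A\<^esub> x) = c \<odot>\<^bsub>B\<^esub> f x)"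

definition is_pmod :: "'k ring \<Rightarrow> ('p::order, 'k, 'm) pmod \<Rightarrow> bool" where
  "is_pmod R M \<longleftrightarrow>
     (\<forall>p. module R (fst M p)) \<and>
     (\<forall>p q. p \<le> q \<longrightarrow> linear_map R (fst M p) (fst M q) (snd M p q)) \<and>
     (\<forall>p. \<forall>x\<in>carrier (fst M p). snd M p p x = x) \<and>
     (\<forall>p q r. p \<le> q \<longrightarrow> q \<le> r \<longrightarrow>
        (\<forall>x\<in>carrier (fst M p). snd M q r (snd M p q x) = snd M p r x))"

definition is_pmorph :: "'k ring \<Rightarrow> ('p::order, 'k, 'a) pmod \<Rightarrow> ('p, 'k, 'b) pmod
    \<Rightarrow> ('p \<Rightarrow> 'a \<Rightarrow> 'b) \<Rightarrow> bool" where
  "is_pmorph R M N f \<longleftrightarrow>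
     (\<forall>p. linear_map R (fst M p) (fst N p) (f p)) \<and>
     (\<forall>p q. p \<le> q \<longrightarrow> (\<forall>x\<in>carrier (fst M p). f q (snd M p q x) = snd N p q (f p x)))"

definition pullback :: "('p \<Rightarrow> 'p) \<Rightarrow> ('p, 'k, 'm) pmod \<Rightarrow> ('p, 'k, 'm) pmod" where
  "pullback T M = ((\<lambda>p. fst M (T p)), (\<lambda>p q. snd M (T p) (T q)))"

definition interleaved :: "'k ring \<Rightarrow> (real \<Rightarrow> 'p::order \<Rightarrow> 'p) \<Rightarrow> real
    \<Rightarrow> ('p, 'k, 'a) pmod \<Rightarrow> ('p, 'k, 'b) pmod \<Rightarrow> bool" where
  "interleaved R T \<epsilon> M N \<longleftrightarrow>
     (\<exists>f g. is_pmorph R M (pullback (T \<epsilon>) N) f \<and> is_pmorph R N (pullback (T \<epsilon>) M) g \<and>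
        (\<forall>p. \<forall>x\<in>carrier (fst M p). g (T \<epsilon> p) (f p x) = snd M p (T \<epsilon> (T \<epsilon> p)) x) \<and>
        (\<forall>p. \<forall>y\<in>carrier (fst N p). f (T \<epsilon> p) (g p y) = snd N p (T \<epsilon> (T \<epsilon> p)) y))"

definition interleaving_dist :: "'k ring \<Rightarrow> (real \<Rightarrow> 'p::order \<Rightarrow> 'p)
    \<Rightarrow> ('p, 'k, 'a) pmod \<Rightarrow> ('p, 'k, 'b) pmod \<Rightarrow> ereal" where
  "interleaving_dist R T M N = Inf (ereal ` {\<epsilon>. \<epsilon> \<ge> 0 \<and> interleaved R T \<epsilon> M N})"

definition ephemeral :: "('p::order, 'k, 'm) pmod \<Rightarrow> bool" where
  "ephemeral M \<longleftrightarrow> (\<forall>p q. p \<lless> q \<longrightarrow> (\<forall>x\<in>carrier (fst M p). snd M p q x = \<zero>\<^bsub>fst M q\<^esub>))"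

definition zero_module :: "('k, unit) module" where
  "zero_module = \<lparr>carrier = {()}, monoid.mult = (\<lambda>_ _. ()), one = (),
                  ring.zero = (), ring.add = (\<lambda>_ _. ()), smult = (\<lambda>_ _. ())\<rparr>"

definition zero_pmod :: "('p, 'k, unit) pmod" where
  "zero_pmod = ((\<lambda>p. zero_module), (\<lambda>p q x. ()))"

text \<open>Elements: compatible families (s_x) for p \<lless> x, extended by undefined elsewhere.\<close>
definition lim_module :: "'k ring \<Rightarrow> ('p::order, 'k, 'm) pmod \<Rightarrow> 'p \<Rightarrow> ('k, 'p \<Rightarrow> 'm) module" where
  "lim_module R M p =
     \<lparr>carrier = {s. (\<forall>x. p \<lless> x \<longrightarrow> s x \<in> carrier (fst M x)) \<and>
                    (\<forall>x y. p \<lless> x \<longrightarrow> x \<le> y \<longrightarrow> s y = snd M x y (s x)) \<and>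
                    (\<forall>x. \<not> p \<lless> x \<longrightarrow> s x = undefined)},
      monoid.mult = (\<lambda>s t. s),
      one = (\<lambda>x. if p \<lless> x then \<zero>\<^bsub>fst M x\<^esub> else undefined),
      ring.zero = (\<lambda>x. if p \<lless> x then \<zero>\<^bsub>fst M x\<^esub> else undefined),
      ring.add = (\<lambda>s t x. if p \<lless> x then s x \<oplus>\<^bsub>fst M x\<^esub> t x else undefined),
      smult = (\<lambda>c s x. if p \<lless> x then c \<odot>\<^bsub>fst M x\<^esub> s x else undefined)\<rparr>"

definition lower_pmod :: "'k ring \<Rightarrow> ('p::order, 'k, 'm) pmod \<Rightarrow> ('p, 'k, 'p \<Rightarrow> 'm) pmod" where
  "lower_pmod R M = (lim_module R M, (\<lambda>p q s x. if q \<lless> x then s x else undefined))"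

text \<open>Direct sum of the M_x over x \<lless> p (finitely supported families), quotiented by the
  submodule generated by the relations incl_x(m) - incl_y(M(x \<le> y) m).\<close>
definition dsum_module :: "'k ring \<Rightarrow> ('p::order, 'k, 'm) pmod \<Rightarrow> 'p \<Rightarrow> ('k, 'p \<Rightarrow> 'm) module" where
  "dsum_module R M p =
     \<lparr>carrier = {s. (\<forall>x. x \<lless> p \<longrightarrow> s x \<in> carrier (fst M x)) \<and>
                    (\<forall>x. \<not> x \<lless> p \<longrightarrow> s x = undefined) \<and>
                    finite {x. x \<lless> p \<and> s x \<noteq> \<zero>\<^bsub>fst M x\<^esub>}},
      monoid.mult = (\<lambda>s t. s),
      one = (\<lambda>x. if x \<lless> p then \<zero>\<^bsub>fst M x\<^esub> else undefined),
      ring.zero = (\<lambda>x. if x \<lless> p then \<zero>\<^bsub>fst M x\<^esub> else undefined),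
      ring.add = (\<lambda>s t x. if x \<lless> p then s x \<oplus>\<^bsub>fst M x\<^esub> t x else undefined),
      smult = (\<lambda>c s x. if x \<lless> p then c \<odot>\<^bsub>fst M x\<^esub> s x else undefined)\<rparr>"

definition dsum_incl :: "('p::order, 'k, 'm) pmod \<Rightarrow> 'p \<Rightarrow> 'p \<Rightarrow> 'm \<Rightarrow> 'p \<Rightarrow> 'm" where
  "dsum_incl M p x m = (\<lambda>y. if y = x then m else if y \<lless> p then \<zero>\<^bsub>fst M y\<^esub> else undefined)"

definition colim_relations :: "'k ring \<Rightarrow> ('p::order, 'k, 'm) pmod \<Rightarrow> 'p \<Rightarrow> ('p \<Rightarrow> 'm) set" where
  "colim_relations R M p =
     \<Inter>{H. submodule H R (dsum_module R M p) \<and>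
          {dsum_incl M p x m \<ominus>\<^bsub>dsum_module R M p\<^esub> dsum_incl M p y (snd M x y m) | x y m.
             x \<lless> p \<and> y \<lless> p \<and> x \<le> y \<and> m \<in> carrier (fst M x)} \<subseteq> H}"

definition colim_module :: "'k ring \<Rightarrow> ('p::order, 'k, 'm) pmod \<Rightarrow> 'p \<Rightarrow> ('k, ('p \<Rightarrow> 'm) set) module" where
  "colim_module R M p =
     (let D = dsum_module R M p; K = colim_relations R M p in
     \<lparr>carrier = {K +>\<^bsub>D\<^esub> a | a. a \<in> carrier D},
      monoid.mult = (\<lambda>A B. A),
      one = K,
      ring.zero = K,
      ring.add = (\<lambda>A B. \<Union>{K +>\<^bsub>D\<^esub> (a \<oplus>\<^bsub>D\<^esub> b) | a b. a \<in> A \<and> b \<in> B}),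
      smult = (\<lambda>c A. \<Union>{K +>\<^bsub>D\<^esub> (c \<odot>\<^bsub>D\<^esub> a) | a. a \<in> A})\<rparr>)"

text \<open>Structure map upper M(p \<le> q): extend representatives by zero and take the class.\<close>
definition colim_map :: "'k ring \<Rightarrow> ('p::order, 'k, 'm) pmod \<Rightarrow> 'p \<Rightarrow> 'p
    \<Rightarrow> ('p \<Rightarrow> 'm) set \<Rightarrow> ('p \<Rightarrow> 'm) set" where
  "colim_map R M p q A =
     \<Union>{colim_relations R M q +>\<^bsub>dsum_module R M q\<^esub>
          (\<lambda>x. if x \<lless> p then a x else if x \<lless> q then \<zero>\<^bsub>fst M x\<^esub> else undefined) | a. a \<in> A}"

definition upper_pmod :: "'k ring \<Rightarrow> ('p::order, 'k, 'm) pmod \<Rightarrow> ('p, 'k, ('p \<Rightarrow> 'm) set) pmod" where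
  "upper_pmod R M = (colim_module R M, colim_map R M)"

end

theory Submission
  imports Defs
begin

text \<open>Fix \<open>\<epsilon> > 0\<close> and write \<open>t = T \<epsilon>\<close>. By TR2, \<open>p \<lless> t p\<close>, so the structure maps
  \<open>M p \<rightarrow> M x\<close> for \<open>x \<gg> t p\<close> form a compatible family, giving \<open>M \<rightarrow> t\<^sup>* (lower M)\<close>, while
  evaluating a compatible family at \<open>t p\<close> gives \<open>lower M \<rightarrow> t\<^sup>* M\<close>; both composites are
  structure maps because a compatible family is determined by any one of its members.
  Dually, \<open>M p\<close> is included into the colimit at \<open>t p\<close>, and the cocone of structure maps into
  \<open>M (t p)\<close> induces \<open>upper M \<rightarrow> t\<^sup>* M\<close>; the composite on \<open>upper M\<close> replaces a family below
  \<open>p\<close> by its image in \<open>M (t p)\<close>, and the two differ by defining relations of the colimit at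
  \<open>t (t p)\<close>. If \<open>M\<close> is ephemeral, \<open>M (p \<le> t (t p)) = 0\<close> because \<open>p \<lless> t (t p)\<close>, so the zero
  maps interleave \<open>M\<close> and \<open>0\<close>. Thus each pair is \<open>\<epsilon>\<close>-interleaved for every \<open>\<epsilon> > 0\<close>.\<close>

lemma way_below_imp_le: "(x::'p::order) \<lless> y \<Longrightarrow> x \<le> y"
  unfolding way_below_def
  by (drule spec[of _ "{y}"], drule spec[of _ y]) (auto simp: directed_def is_sup_def)

lemma le_way_below_trans: "(x::'p::order) \<le> y \<Longrightarrow> y \<lless> z \<Longrightarrow> x \<lless> z"
  unfolding way_below_def by (meson order_trans)

lemma way_below_le_trans: "(x::'p::order) \<lless> y \<Longrightarrow> y \<le> z \<Longrightarrow> x \<lless> z"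
  unfolding way_below_def by (meson order_trans)

lemma way_below_le_imp_le: "(x::'p::order) \<lless> q \<Longrightarrow> q \<le> r \<Longrightarrow> x \<le> r"
  using way_below_imp_le order_trans by blast

lemma interleaving_dist_eq_0I:
  assumes "\<And>\<epsilon>. \<epsilon> > 0 \<Longrightarrow> interleaved R T \<epsilon> M N"
  shows "interleaving_dist R T M N = 0"
proof -
  let ?S = "{\<epsilon>. \<epsilon> \<ge> 0 \<and> interleaved R T \<epsilon> M N}"
  have "0 \<le> Inf (ereal ` ?S)" by (rule Inf_greatest) auto
  moreover have "Inf (ereal ` ?S) \<le> 0"
  proof (rule ereal_le_epsilon2)
    fix \<epsilon> :: real assume "\<epsilon> > 0"
    then have "Inf (ereal ` ?S) \<le> ereal \<epsilon>" by (intro Inf_lower) (use assms in auto)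
    then show "Inf (ereal ` ?S) \<le> 0 + ereal \<epsilon>" by simp
  qed
  ultimately show ?thesis unfolding interleaving_dist_def by simp
qed

lemma linear_map_abelian_group_hom:
  assumes "linear_map R A B f" "abelian_group A" "abelian_group B"
  shows "abelian_group_hom A B f"
proof -
  interpret A: abelian_group A by fact
  interpret B: abelian_group B by fact
  show ?thesis
    using assms(1) unfolding linear_map_def
    by (intro abelian_group_homI assms(2,3) group_hom.intro group_hom_axioms.intro A.a_group B.a_group)
      (auto simp: hom_def)
qed

lemma linear_map_zero:
  "linear_map R A B f \<Longrightarrow> abelian_group A \<Longrightarrow> abelian_group B \<Longrightarrow> f \<zero>\<^bsub>A\<^esub> = \<zero>\<^bsub>B\<^esub>"
  using abelian_group_hom.hom_zero[OF linear_map_abelian_group_hom] .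

lemma linear_map_minus:
  assumes "linear_map R A B f" "abelian_group A" "abelian_group B" "x \<in> carrier A" "y \<in> carrier A"
  shows "f (x \<ominus>\<^bsub>A\<^esub> y) = f x \<ominus>\<^bsub>B\<^esub> f y"
proof -
  interpret abelian_group_hom A B f by (rule linear_map_abelian_group_hom[OF assms(1-3)])
  show ?thesis using assms(4,5) by (simp add: a_minus_def)
qed

lemma linear_map_comp:
  "linear_map R A B f \<Longrightarrow> linear_map R B C h \<Longrightarrow> linear_map R A C (\<lambda>a. h (f a))"
  unfolding linear_map_def by (auto simp: Pi_iff)

lemma submodule_vimage:
  assumes A: "module R A" and B: "module R B" and f: "linear_map R A B f" and S: "submodule S R B"
  shows "submodule {a \<in> carrier A. f a \<in> S} R A"
proof -
  interpret A: module R A by fact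
  interpret B: module R B by fact
  have hom: "abelian_group_hom A B f"
    by (rule linear_map_abelian_group_hom[OF f A.abelian_group_axioms B.abelian_group_axioms])
  show ?thesis
  proof (rule A.submoduleI)
    show "\<zero>\<^bsub>A\<^esub> \<in> {a \<in> carrier A. f a \<in> S}"
      using abelian_group_hom.hom_zero[OF hom] subgroup.one_closed[OF submodule.axioms(1)[OF S]] by simp
    show "\<ominus>\<^bsub>A\<^esub> a \<in> {a \<in> carrier A. f a \<in> S}" if "a \<in> {a \<in> carrier A. f a \<in> S}" for a
      using that abelian_group_hom.hom_a_inv[OF hom] B.submoduleE(3)[OF S] by auto
    show "a \<oplus>\<^bsub>A\<^esub> b \<in> {a \<in> carrier A. f a \<in> S}"
      if "a \<in> {a \<in> carrier A. f a \<in> S}" "b \<in> {a \<in> carrier A. f a \<in> S}" for a b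
      using that abelian_group_hom.hom_add[OF hom] B.submoduleE(5)[OF S] by auto
    show "c \<odot>\<^bsub>A\<^esub> a \<in> {a \<in> carrier A. f a \<in> S}"
      if "c \<in> carrier R" "a \<in> {a \<in> carrier A. f a \<in> S}" for c a
      using that f B.submoduleE(4)[OF S] unfolding linear_map_def by auto
  qed auto
qed

lemma zero_submodule:
  assumes "module R M"
  shows "submodule {\<zero>\<^bsub>M\<^esub>} R M"
proof -
  interpret module R M by fact
  show ?thesis
  proof (rule submoduleI)
    show "\<ominus>\<^bsub>M\<^esub> a \<in> {\<zero>\<^bsub>M\<^esub>}" if "a \<in> {\<zero>\<^bsub>M\<^esub>}" for a
      using that by simp
    show "c \<odot>\<^bsub>M\<^esub> a \<in> {\<zero>\<^bsub>M\<^esub>}" if "c \<in> carrier R" "a \<in> {\<zero>\<^bsub>M\<^esub>}" for c a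
      using that smult_r_null by simp
  qed simp_all
qed

lemma Union_eq_if_all_eq: "(\<And>A. A \<in> \<A> \<Longrightarrow> A = B) \<Longrightarrow> B \<in> \<A> \<Longrightarrow> \<Union>\<A> = B"
  by blast

lemma submodule_rcos_self:
  assumes "module R M" "submodule H R M" "a \<in> carrier M"
  shows "a \<in> H +>\<^bsub>M\<^esub> a"
proof -
  interpret module R M by fact
  show ?thesis
    using M.a_rcosI[of "\<zero>\<^bsub>M\<^esub>" H a] submoduleE(1)[OF assms(2)] assms(3)
      subgroup.one_closed[OF submodule.axioms(1)[OF assms(2)]]
    by simp
qed

lemma submodule_rcos_repr:
  assumes "module R M" "submodule H R M" "a \<in> carrier M" "b \<in> H +>\<^bsub>M\<^esub> a"
  shows "H +>\<^bsub>M\<^esub> b = H +>\<^bsub>M\<^esub> a"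
proof -
  interpret module R M by fact
  show ?thesis
    using M.a_repr_independence[OF assms(4,3) submodule.axioms(1)[OF assms(2)]] by (rule sym)
qed

lemma submodule_rcos_eqI:
  assumes M: "module R M" and H: "submodule H R M" and a: "a \<in> carrier M" and b: "b \<in> carrier M"
    and ab: "a \<ominus>\<^bsub>M\<^esub> b \<in> H"
  shows "H +>\<^bsub>M\<^esub> a = H +>\<^bsub>M\<^esub> b"
proof -
  interpret module R M by fact
  have "a = (a \<ominus>\<^bsub>M\<^esub> b) \<oplus>\<^bsub>M\<^esub> b" using a b by (simp add: a_minus_def M.a_assoc M.l_neg)
  then have "a \<in> H +>\<^bsub>M\<^esub> b" using M.a_rcosI[OF ab submoduleE(1)[OF H] b] by simp
  then show ?thesis by (rule submodule_rcos_repr[OF M H b])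
qed

lemma submodule_rcos_add:
  assumes M: "module R M" and H: "submodule H R M" and a0: "a0 \<in> carrier M" and b0: "b0 \<in> carrier M"
  shows "\<Union>{H +>\<^bsub>M\<^esub> (a \<oplus>\<^bsub>M\<^esub> b) | a b. a \<in> H +>\<^bsub>M\<^esub> a0 \<and> b \<in> H +>\<^bsub>M\<^esub> b0}
       = H +>\<^bsub>M\<^esub> (a0 \<oplus>\<^bsub>M\<^esub> b0)"
proof -
  interpret module R M by fact
  have eq: "H +>\<^bsub>M\<^esub> (a \<oplus>\<^bsub>M\<^esub> b) = H +>\<^bsub>M\<^esub> (a0 \<oplus>\<^bsub>M\<^esub> b0)"
    if ab0: "a \<in> H +>\<^bsub>M\<^esub> a0" "b \<in> H +>\<^bsub>M\<^esub> b0" for a b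
  proof -
    obtain k l where kl: "k \<in> H" "l \<in> H" and ab: "a = k \<oplus>\<^bsub>M\<^esub> a0" "b = l \<oplus>\<^bsub>M\<^esub> b0"
      using ab0 unfolding a_r_coset_def' by blast
    have "a \<oplus>\<^bsub>M\<^esub> b = (k \<oplus>\<^bsub>M\<^esub> l) \<oplus>\<^bsub>M\<^esub> (a0 \<oplus>\<^bsub>M\<^esub> b0)"
      using ab kl submoduleE(1)[OF H] a0 b0 by (simp add: subsetD M.a_ac)
    then have "a \<oplus>\<^bsub>M\<^esub> b \<in> H +>\<^bsub>M\<^esub> (a0 \<oplus>\<^bsub>M\<^esub> b0)"
      using M.a_rcosI submoduleE(1,5)[OF H] kl a0 b0 by simp
    then show ?thesis by (rule submodule_rcos_repr[OF M H M.a_closed[OF a0 b0]])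
  qed
  show ?thesis
  proof (rule Union_eq_if_all_eq)
    show "A = H +>\<^bsub>M\<^esub> (a0 \<oplus>\<^bsub>M\<^esub> b0)"
      if "A \<in> {H +>\<^bsub>M\<^esub> (a \<oplus>\<^bsub>M\<^esub> b) | a b. a \<in> H +>\<^bsub>M\<^esub> a0 \<and> b \<in> H +>\<^bsub>M\<^esub> b0}" for A
      using that eq by auto
    show "H +>\<^bsub>M\<^esub> (a0 \<oplus>\<^bsub>M\<^esub> b0)
      \<in> {H +>\<^bsub>M\<^esub> (a \<oplus>\<^bsub>M\<^esub> b) | a b. a \<in> H +>\<^bsub>M\<^esub> a0 \<and> b \<in> H +>\<^bsub>M\<^esub> b0}"
      using submodule_rcos_self[OF M H a0] submodule_rcos_self[OF M H b0] by blast
  qed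
qed

lemma submodule_rcos_smult:
  assumes M: "module R M" and H: "submodule H R M" and a0: "a0 \<in> carrier M" and c: "c \<in> carrier R"
  shows "\<Union>{H +>\<^bsub>M\<^esub> (c \<odot>\<^bsub>M\<^esub> a) | a. a \<in> H +>\<^bsub>M\<^esub> a0} = H +>\<^bsub>M\<^esub> (c \<odot>\<^bsub>M\<^esub> a0)"
proof -
  interpret module R M by fact
  have eq: "H +>\<^bsub>M\<^esub> (c \<odot>\<^bsub>M\<^esub> a) = H +>\<^bsub>M\<^esub> (c \<odot>\<^bsub>M\<^esub> a0)" if a0': "a \<in> H +>\<^bsub>M\<^esub> a0" for a
  proof -
    obtain k where k: "k \<in> H" and a: "a = k \<oplus>\<^bsub>M\<^esub> a0"
      using a0' unfolding a_r_coset_def' by blast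
    have "c \<odot>\<^bsub>M\<^esub> a = (c \<odot>\<^bsub>M\<^esub> k) \<oplus>\<^bsub>M\<^esub> (c \<odot>\<^bsub>M\<^esub> a0)"
      using a k submoduleE(1)[OF H] a0 c by (simp add: subsetD smult_r_distr)
    then have "c \<odot>\<^bsub>M\<^esub> a \<in> H +>\<^bsub>M\<^esub> (c \<odot>\<^bsub>M\<^esub> a0)"
      using M.a_rcosI submoduleE(1,4)[OF H] k a0 c by simp
    then show ?thesis by (rule submodule_rcos_repr[OF M H smult_closed[OF c a0]])
  qed
  show ?thesis
  proof (rule Union_eq_if_all_eq)
    show "A = H +>\<^bsub>M\<^esub> (c \<odot>\<^bsub>M\<^esub> a0)"
      if "A \<in> {H +>\<^bsub>M\<^esub> (c \<odot>\<^bsub>M\<^esub> a) | a. a \<in> H +>\<^bsub>M\<^esub> a0}" for A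
      using that eq by auto
    show "H +>\<^bsub>M\<^esub> (c \<odot>\<^bsub>M\<^esub> a0) \<in> {H +>\<^bsub>M\<^esub> (c \<odot>\<^bsub>M\<^esub> a) | a. a \<in> H +>\<^bsub>M\<^esub> a0}"
      using submodule_rcos_self[OF M H a0] by blast
  qed
qed

section \<open>Direct sums of the modules of a persistence module\<close>

locale persistence_module =
  fixes R :: "'k ring" and M :: "('p::order, 'k, 'm) pmod"
  assumes cring_R: "cring R" and is_pmod_M: "is_pmod R M"
begin

lemma module_at: "module R (fst M x)"
  using is_pmod_M unfolding is_pmod_def by auto

lemma abelian_group_at: "abelian_group (fst M x)"
  using module_at unfolding module_def by auto

lemma abelian_monoid_at: "abelian_monoid (fst M x)"
  using abelian_group_at abelian_group.axioms(1) by blast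

lemma linear_map_at: "x \<le> y \<Longrightarrow> linear_map R (fst M x) (fst M y) (snd M x y)"
  using is_pmod_M unfolding is_pmod_def by auto

lemma map_closed: "x \<le> y \<Longrightarrow> m \<in> carrier (fst M x) \<Longrightarrow> snd M x y m \<in> carrier (fst M y)"
  using linear_map_at[of x y] unfolding linear_map_def by auto

lemma map_add:
  "x \<le> y \<Longrightarrow> m \<in> carrier (fst M x) \<Longrightarrow> n \<in> carrier (fst M x) \<Longrightarrow>
   snd M x y (m \<oplus>\<^bsub>fst M x\<^esub> n) = snd M x y m \<oplus>\<^bsub>fst M y\<^esub> snd M x y n"
  using linear_map_at[of x y] unfolding linear_map_def by auto

lemma map_smult:
  "x \<le> y \<Longrightarrow> c \<in> carrier R \<Longrightarrow> m \<in> carrier (fst M x) \<Longrightarrow>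
   snd M x y (c \<odot>\<^bsub>fst M x\<^esub> m) = c \<odot>\<^bsub>fst M y\<^esub> snd M x y m"
  using linear_map_at[of x y] unfolding linear_map_def by auto

lemma map_comp:
  "x \<le> y \<Longrightarrow> y \<le> z \<Longrightarrow> m \<in> carrier (fst M x) \<Longrightarrow> snd M y z (snd M x y m) = snd M x z m"
  using is_pmod_M unfolding is_pmod_def by auto

lemma map_zero: "x \<le> y \<Longrightarrow> snd M x y \<zero>\<^bsub>fst M x\<^esub> = \<zero>\<^bsub>fst M y\<^esub>"
  using linear_map_zero[OF linear_map_at abelian_group_at abelian_group_at] .

lemma minus_zero_at: "\<ominus>\<^bsub>fst M x\<^esub> \<zero>\<^bsub>fst M x\<^esub> = \<zero>\<^bsub>fst M x\<^esub>"
  using abelian_group.minus_equality[OF abelian_group_at]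
    abelian_monoid.l_zero[OF abelian_monoid_at] abelian_monoid.zero_closed[OF abelian_monoid_at]
  by metis

definition dsum_supp :: "'p \<Rightarrow> ('p \<Rightarrow> 'm) \<Rightarrow> 'p set" where
  "dsum_supp q a = {x. x \<lless> q \<and> a x \<noteq> \<zero>\<^bsub>fst M x\<^esub>}"

lemma dsum_add:
  "a \<oplus>\<^bsub>dsum_module R M q\<^esub> b = (\<lambda>x. if x \<lless> q then a x \<oplus>\<^bsub>fst M x\<^esub> b x else undefined)"
  unfolding dsum_module_def by simp

lemma dsum_smult:
  "c \<odot>\<^bsub>dsum_module R M q\<^esub> a = (\<lambda>x. if x \<lless> q then c \<odot>\<^bsub>fst M x\<^esub> a x else undefined)"
  unfolding dsum_module_def by simp

lemma dsum_zero: "\<zero>\<^bsub>dsum_module R M q\<^esub> = (\<lambda>x. if x \<lless> q then \<zero>\<^bsub>fst M x\<^esub> else undefined)"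
  unfolding dsum_module_def by simp

lemma carrier_dsum_iff:
  "a \<in> carrier (dsum_module R M q) \<longleftrightarrow>
   (\<forall>x. x \<lless> q \<longrightarrow> a x \<in> carrier (fst M x)) \<and> (\<forall>x. \<not> x \<lless> q \<longrightarrow> a x = undefined) \<and>
   finite (dsum_supp q a)"
  unfolding dsum_module_def dsum_supp_def by simp

lemma dsum_supp_add_subset:
  "dsum_supp q (a \<oplus>\<^bsub>dsum_module R M q\<^esub> b) \<subseteq> dsum_supp q a \<union> dsum_supp q b"
  unfolding dsum_supp_def dsum_add
  using abelian_monoid.l_zero[OF abelian_monoid_at] abelian_monoid.zero_closed[OF abelian_monoid_at]
  by auto

lemma dsum_supp_smult_subset:
  "c \<in> carrier R \<Longrightarrow> dsum_supp q (c \<odot>\<^bsub>dsum_module R M q\<^esub> a) \<subseteq> dsum_supp q a"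
  unfolding dsum_supp_def dsum_smult using module.smult_r_null[OF module_at] by auto

lemma dsum_neg_closed:
  assumes a: "a \<in> carrier (dsum_module R M q)"
  shows "(\<lambda>x. if x \<lless> q then \<ominus>\<^bsub>fst M x\<^esub> a x else undefined) \<in> carrier (dsum_module R M q)"
proof -
  have "dsum_supp q (\<lambda>x. if x \<lless> q then \<ominus>\<^bsub>fst M x\<^esub> a x else undefined) \<subseteq> dsum_supp q a"
    using a unfolding dsum_supp_def carrier_dsum_iff
    by (auto simp: minus_zero_at)
  then show ?thesis
    using a unfolding carrier_dsum_iff
    by (auto simp: abelian_group.a_inv_closed[OF abelian_group_at] intro: rev_finite_subset)
qed

lemma abelian_group_dsum: "abelian_group (dsum_module R M q)"
proof (rule abelian_groupI)
  fix a b assume a: "a \<in> carrier (dsum_module R M q)" and b: "b \<in> carrier (dsum_module R M q)"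
  have "finite (dsum_supp q (a \<oplus>\<^bsub>dsum_module R M q\<^esub> b))"
    using a b rev_finite_subset[OF _ dsum_supp_add_subset] unfolding carrier_dsum_iff by blast
  then show "a \<oplus>\<^bsub>dsum_module R M q\<^esub> b \<in> carrier (dsum_module R M q)"
    using a b unfolding carrier_dsum_iff
    by (auto simp: dsum_add abelian_monoid.a_closed[OF abelian_monoid_at])
  show "a \<oplus>\<^bsub>dsum_module R M q\<^esub> b = b \<oplus>\<^bsub>dsum_module R M q\<^esub> a"
    using a b unfolding carrier_dsum_iff dsum_add
    by (intro ext) (simp add: abelian_monoid.a_comm[OF abelian_monoid_at])
next
  show "\<zero>\<^bsub>dsum_module R M q\<^esub> \<in> carrier (dsum_module R M q)"
    unfolding carrier_dsum_iff dsum_zero dsum_supp_def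
    by (simp add: abelian_monoid.zero_closed[OF abelian_monoid_at])
next
  fix a b c
  assume "a \<in> carrier (dsum_module R M q)" "b \<in> carrier (dsum_module R M q)"
    "c \<in> carrier (dsum_module R M q)"
  then show "a \<oplus>\<^bsub>dsum_module R M q\<^esub> b \<oplus>\<^bsub>dsum_module R M q\<^esub> c
           = a \<oplus>\<^bsub>dsum_module R M q\<^esub> (b \<oplus>\<^bsub>dsum_module R M q\<^esub> c)"
    unfolding carrier_dsum_iff dsum_add
    by (intro ext) (simp add: abelian_monoid.a_assoc[OF abelian_monoid_at])
next
  fix a assume a: "a \<in> carrier (dsum_module R M q)"
  then show "\<zero>\<^bsub>dsum_module R M q\<^esub> \<oplus>\<^bsub>dsum_module R M q\<^esub> a = a"
    unfolding carrier_dsum_iff dsum_add dsum_zero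
    by (intro ext) (simp add: abelian_monoid.l_zero[OF abelian_monoid_at])
  have "(\<lambda>x. if x \<lless> q then \<ominus>\<^bsub>fst M x\<^esub> a x else undefined) \<oplus>\<^bsub>dsum_module R M q\<^esub> a
        = \<zero>\<^bsub>dsum_module R M q\<^esub>"
    using a unfolding carrier_dsum_iff dsum_add dsum_zero
    by (intro ext) (simp add: abelian_group.l_neg[OF abelian_group_at])
  then show "\<exists>b\<in>carrier (dsum_module R M q). b \<oplus>\<^bsub>dsum_module R M q\<^esub> a = \<zero>\<^bsub>dsum_module R M q\<^esub>"
    using dsum_neg_closed[OF a] by blast
qed

lemma module_dsum: "module R (dsum_module R M q)"
proof (rule moduleI[OF cring_R abelian_group_dsum])
  fix c a assume c: "c \<in> carrier R" and a: "a \<in> carrier (dsum_module R M q)"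
  have "finite (dsum_supp q (c \<odot>\<^bsub>dsum_module R M q\<^esub> a))"
    using a rev_finite_subset[OF _ dsum_supp_smult_subset[OF c]] unfolding carrier_dsum_iff by blast
  then show "c \<odot>\<^bsub>dsum_module R M q\<^esub> a \<in> carrier (dsum_module R M q)"
    using a c unfolding carrier_dsum_iff
    by (auto simp: dsum_smult module.smult_closed[OF module_at])
next
  fix c d a
  assume "c \<in> carrier R" "d \<in> carrier R" "a \<in> carrier (dsum_module R M q)"
  then show "(c \<oplus>\<^bsub>R\<^esub> d) \<odot>\<^bsub>dsum_module R M q\<^esub> a
           = c \<odot>\<^bsub>dsum_module R M q\<^esub> a \<oplus>\<^bsub>dsum_module R M q\<^esub> d \<odot>\<^bsub>dsum_module R M q\<^esub> a"
    and "(c \<otimes>\<^bsub>R\<^esub> d) \<odot>\<^bsub>dsum_module R M q\<^esub> a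
           = c \<odot>\<^bsub>dsum_module R M q\<^esub> (d \<odot>\<^bsub>dsum_module R M q\<^esub> a)"
    unfolding carrier_dsum_iff dsum_add dsum_smult
    by (auto intro!: ext simp: module.smult_l_distr[OF module_at] module.smult_assoc1[OF module_at])
next
  fix c a b
  assume "c \<in> carrier R" "a \<in> carrier (dsum_module R M q)" "b \<in> carrier (dsum_module R M q)"
  then show "c \<odot>\<^bsub>dsum_module R M q\<^esub> (a \<oplus>\<^bsub>dsum_module R M q\<^esub> b)
           = c \<odot>\<^bsub>dsum_module R M q\<^esub> a \<oplus>\<^bsub>dsum_module R M q\<^esub> c \<odot>\<^bsub>dsum_module R M q\<^esub> b"
    unfolding carrier_dsum_iff dsum_add dsum_smult
    by (intro ext) (simp add: module.smult_r_distr[OF module_at])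
next
  fix a assume "a \<in> carrier (dsum_module R M q)"
  then show "\<one>\<^bsub>R\<^esub> \<odot>\<^bsub>dsum_module R M q\<^esub> a = a"
    unfolding carrier_dsum_iff dsum_smult by (intro ext) (simp add: module.smult_one[OF module_at])
qed

lemma dsum_incl_closed:
  assumes "x \<lless> q" "m \<in> carrier (fst M x)"
  shows "dsum_incl M q x m \<in> carrier (dsum_module R M q)"
proof -
  have "dsum_supp q (dsum_incl M q x m) \<subseteq> {x}" unfolding dsum_supp_def dsum_incl_def by auto
  then show ?thesis
    using assms unfolding carrier_dsum_iff dsum_incl_def
    by (auto simp: abelian_monoid.zero_closed[OF abelian_monoid_at] intro: rev_finite_subset)
qed

lemma linear_map_dsum_incl:
  assumes "x \<lless> q"
  shows "linear_map R (fst M x) (dsum_module R M q) (dsum_incl M q x)"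
  unfolding linear_map_def
proof (intro conjI ballI Pi_I)
  show "dsum_incl M q x m \<in> carrier (dsum_module R M q)" if "m \<in> carrier (fst M x)" for m
    using dsum_incl_closed[OF assms that] .
  show "dsum_incl M q x (m \<oplus>\<^bsub>fst M x\<^esub> n)
        = dsum_incl M q x m \<oplus>\<^bsub>dsum_module R M q\<^esub> dsum_incl M q x n"
    if "m \<in> carrier (fst M x)" "n \<in> carrier (fst M x)" for m n
    using assms unfolding dsum_add dsum_incl_def
    by (auto intro!: ext simp: abelian_monoid.l_zero[OF abelian_monoid_at]
        abelian_monoid.zero_closed[OF abelian_monoid_at])
  show "dsum_incl M q x (c \<odot>\<^bsub>fst M x\<^esub> m) = c \<odot>\<^bsub>dsum_module R M q\<^esub> dsum_incl M q x m"
    if "c \<in> carrier R" "m \<in> carrier (fst M x)" for c m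
    using assms that unfolding dsum_smult dsum_incl_def
    by (auto intro!: ext simp: module.smult_r_null[OF module_at])
qed

lemma dsum_induct [consumes 1, case_names zero add]:
  assumes a: "a \<in> carrier (dsum_module R M q)"
    and zero: "P \<zero>\<^bsub>dsum_module R M q\<^esub>"
    and add: "\<And>x m a. x \<lless> q \<Longrightarrow> m \<in> carrier (fst M x) \<Longrightarrow> a \<in> carrier (dsum_module R M q) \<Longrightarrow>
                P a \<Longrightarrow> P (dsum_incl M q x m \<oplus>\<^bsub>dsum_module R M q\<^esub> a)"
  shows "P a"
proof -
  have "P a" if "a \<in> carrier (dsum_module R M q)" "card (dsum_supp q a) = n" for n a
    using that
  proof (induction n arbitrary: a)
    case 0
    then have "dsum_supp q a = {}" unfolding carrier_dsum_iff by auto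
    then have "a = \<zero>\<^bsub>dsum_module R M q\<^esub>"
      using 0(1) unfolding carrier_dsum_iff dsum_zero dsum_supp_def by (intro ext) auto
    then show ?case using zero by simp
  next
    case (Suc n)
    then have fin: "finite (dsum_supp q a)" unfolding carrier_dsum_iff by blast
    with Suc obtain x where x: "x \<in> dsum_supp q a" by fastforce
    then have xq: "x \<lless> q" unfolding dsum_supp_def by simp
    have ax: "a x \<in> carrier (fst M x)" using Suc(2) xq unfolding carrier_dsum_iff by blast
    define a' where "a' = a(x := \<zero>\<^bsub>fst M x\<^esub>)"
    have supp': "dsum_supp q a' = dsum_supp q a - {x}" unfolding dsum_supp_def a'_def by auto
    have a': "a' \<in> carrier (dsum_module R M q)"
      using Suc(2) xq supp' fin unfolding carrier_dsum_iff a'_def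
      by (auto simp: abelian_monoid.zero_closed[OF abelian_monoid_at])
    have "card (dsum_supp q a') = n" using supp' Suc(3) fin x by simp
    then have "P a'" using Suc.IH a' by blast
    moreover have "a = dsum_incl M q x (a x) \<oplus>\<^bsub>dsum_module R M q\<^esub> a'"
      using Suc(2) xq ax unfolding carrier_dsum_iff dsum_add dsum_incl_def a'_def
      by (intro ext) (auto simp: abelian_monoid.l_zero[OF abelian_monoid_at]
          abelian_monoid.r_zero[OF abelian_monoid_at])
    ultimately show ?case using add[OF xq ax a'] by simp
  qed
  then show ?thesis using a by blast
qed

lemma linear_maps_dsum_congruent:
  assumes N: "module R N" and S: "submodule S R N"
    and f: "linear_map R (dsum_module R M q) N f" and h: "linear_map R (dsum_module R M q) N h"
    and gen: "\<And>x m. x \<lless> q \<Longrightarrow> m \<in> carrier (fst M x) \<Longrightarrow>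
                f (dsum_incl M q x m) \<ominus>\<^bsub>N\<^esub> h (dsum_incl M q x m) \<in> S"
    and a: "a \<in> carrier (dsum_module R M q)"
  shows "f a \<ominus>\<^bsub>N\<^esub> h a \<in> S"
  using a
proof (induction rule: dsum_induct)
  interpret N: module R N by fact
  case zero
  have "f \<zero>\<^bsub>dsum_module R M q\<^esub> = \<zero>\<^bsub>N\<^esub>" "h \<zero>\<^bsub>dsum_module R M q\<^esub> = \<zero>\<^bsub>N\<^esub>"
    using linear_map_zero[OF f abelian_group_dsum N.abelian_group_axioms]
      linear_map_zero[OF h abelian_group_dsum N.abelian_group_axioms] by simp_all
  then show ?case
    using subgroup.one_closed[OF submodule.axioms(1)[OF S]] by (simp add: a_minus_def N.r_neg)
next
  interpret N: module R N by fact
  case (add x m a)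
  let ?i = "dsum_incl M q x m"
  have i: "?i \<in> carrier (dsum_module R M q)" by (rule dsum_incl_closed[OF add(1,2)])
  have closed: "f ?i \<in> carrier N" "h ?i \<in> carrier N" "f a \<in> carrier N" "h a \<in> carrier N"
    using f h i add(3) unfolding linear_map_def by auto
  have "f (?i \<oplus>\<^bsub>dsum_module R M q\<^esub> a) \<ominus>\<^bsub>N\<^esub> h (?i \<oplus>\<^bsub>dsum_module R M q\<^esub> a)
        = (f ?i \<ominus>\<^bsub>N\<^esub> h ?i) \<oplus>\<^bsub>N\<^esub> (f a \<ominus>\<^bsub>N\<^esub> h a)"
    using f h i add(3) closed unfolding linear_map_def
    by (simp add: a_minus_def N.minus_add N.a_ac)
  then show ?case using N.submoduleE(5)[OF S gen[OF add(1,2)] add(4)] by simp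
qed

lemma linear_maps_dsum_eqI:
  assumes N: "module R N"
    and f: "linear_map R (dsum_module R M q) N f" and h: "linear_map R (dsum_module R M q) N h"
    and gen: "\<And>x m. x \<lless> q \<Longrightarrow> m \<in> carrier (fst M x) \<Longrightarrow> f (dsum_incl M q x m) = h (dsum_incl M q x m)"
    and a: "a \<in> carrier (dsum_module R M q)"
  shows "f a = h a"
proof -
  interpret N: module R N by fact
  have closed: "f b \<in> carrier N" "h b \<in> carrier N" if "b \<in> carrier (dsum_module R M q)" for b
    using f h that unfolding linear_map_def by auto
  have "f a \<ominus>\<^bsub>N\<^esub> h a \<in> {\<zero>\<^bsub>N\<^esub>}"
    by (rule linear_maps_dsum_congruent[OF N zero_submodule[OF N] f h _ a])
      (simp add: gen closed dsum_incl_closed N.r_neg a_minus_def)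
  then show ?thesis
    using closed[OF a] by (metis N.a_assoc N.a_inv_closed N.l_neg N.l_zero N.r_zero a_minus_def singletonD)
qed

text \<open>For \<open>q \<le> r\<close>, the cocone of structure maps \<open>M x \<rightarrow> M r\<close> (\<open>x \<lless> q\<close>) summed over the
  support; it vanishes on the relations and so induces \<open>colim\<^sub>x\<^sub>\<lless>\<^sub>q M x \<rightarrow> M r\<close>.\<close>

definition dsum_eval :: "'p \<Rightarrow> 'p \<Rightarrow> ('p \<Rightarrow> 'm) \<Rightarrow> 'm" where
  "dsum_eval q r a = finsum (fst M r) (\<lambda>x. snd M x r (a x)) (dsum_supp q a)"

lemma dsum_eval_over_superset:
  assumes qr: "q \<le> r" and a: "a \<in> carrier (dsum_module R M q)"
    and F: "finite F" "dsum_supp q a \<subseteq> F" "F \<subseteq> {x. x \<lless> q}"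
  shows "dsum_eval q r a = finsum (fst M r) (\<lambda>x. snd M x r (a x)) F"
proof -
  interpret Mr: abelian_group "fst M r" by (rule abelian_group_at)
  have "snd M x r (a x) \<in> carrier (fst M r)" if "x \<in> F" for x
    using that F(3) a qr map_closed way_below_le_imp_le unfolding carrier_dsum_iff by blast
  moreover have "snd M x r (a x) = \<zero>\<^bsub>fst M r\<^esub>" if "x \<in> F - dsum_supp q a" for x
    using that F(3) qr map_zero[OF way_below_le_imp_le] unfolding dsum_supp_def by auto
  ultimately show ?thesis
    unfolding dsum_eval_def using F(1,2)
    by (intro Mr.add.finprod_mono_neutral_cong_right[symmetric]) auto
qed

lemma dsum_eval_summand_closed:
  "q \<le> r \<Longrightarrow> a \<in> carrier (dsum_module R M q) \<Longrightarrow> x \<lless> q \<Longrightarrow> snd M x r (a x) \<in> carrier (fst M r)"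
  using map_closed way_below_le_imp_le unfolding carrier_dsum_iff by blast

lemma dsum_eval_add:
  assumes qr: "q \<le> r" and a: "a \<in> carrier (dsum_module R M q)" and b: "b \<in> carrier (dsum_module R M q)"
  shows "dsum_eval q r (a \<oplus>\<^bsub>dsum_module R M q\<^esub> b) = dsum_eval q r a \<oplus>\<^bsub>fst M r\<^esub> dsum_eval q r b"
proof -
  interpret Mr: abelian_group "fst M r" by (rule abelian_group_at)
  let ?F = "dsum_supp q a \<union> dsum_supp q b"
  have F: "finite ?F" "?F \<subseteq> {x. x \<lless> q}"
    using a b unfolding carrier_dsum_iff dsum_supp_def by auto
  have ab: "a \<oplus>\<^bsub>dsum_module R M q\<^esub> b \<in> carrier (dsum_module R M q)"
    using abelian_monoid.a_closed[OF abelian_group.axioms(1)[OF abelian_group_dsum] a b] .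
  have "dsum_eval q r (a \<oplus>\<^bsub>dsum_module R M q\<^esub> b)
      = finsum (fst M r) (\<lambda>x. snd M x r ((a \<oplus>\<^bsub>dsum_module R M q\<^esub> b) x)) ?F"
    by (rule dsum_eval_over_superset[OF qr ab F(1) dsum_supp_add_subset F(2)])
  also have "\<dots> = finsum (fst M r) (\<lambda>x. snd M x r (a x) \<oplus>\<^bsub>fst M r\<^esub> snd M x r (b x)) ?F"
    using F(2) a b dsum_eval_summand_closed[OF qr] way_below_le_imp_le[OF _ qr]
    unfolding dsum_add carrier_dsum_iff
    by (intro Mr.finsum_cong') (auto simp: map_add)
  also have "\<dots> = dsum_eval q r a \<oplus>\<^bsub>fst M r\<^esub> dsum_eval q r b"
    using F dsum_eval_summand_closed[OF qr a] dsum_eval_summand_closed[OF qr b]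
      dsum_eval_over_superset[OF qr a F(1) _ F(2)] dsum_eval_over_superset[OF qr b F(1) _ F(2)]
    by (subst Mr.finsum_addf) auto
  finally show ?thesis .
qed

lemma dsum_eval_smult:
  assumes qr: "q \<le> r" and c: "c \<in> carrier R" and a: "a \<in> carrier (dsum_module R M q)"
  shows "dsum_eval q r (c \<odot>\<^bsub>dsum_module R M q\<^esub> a) = c \<odot>\<^bsub>fst M r\<^esub> dsum_eval q r a"
proof -
  interpret Mr: module R "fst M r" by (rule module_at)
  have F: "finite (dsum_supp q a)" "dsum_supp q a \<subseteq> {x. x \<lless> q}"
    using a unfolding carrier_dsum_iff dsum_supp_def by auto
  have "dsum_eval q r (c \<odot>\<^bsub>dsum_module R M q\<^esub> a)
      = finsum (fst M r) (\<lambda>x. snd M x r ((c \<odot>\<^bsub>dsum_module R M q\<^esub> a) x)) (dsum_supp q a)"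
    by (rule dsum_eval_over_superset[OF qr module.smult_closed[OF module_dsum c a] F(1)
          dsum_supp_smult_subset[OF c] F(2)])
  also have "\<dots> = finsum (fst M r) (\<lambda>x. c \<odot>\<^bsub>fst M r\<^esub> snd M x r (a x)) (dsum_supp q a)"
    using F(2) a c dsum_eval_summand_closed[OF qr] way_below_le_imp_le[OF _ qr]
    unfolding dsum_smult carrier_dsum_iff
    by (intro Mr.finsum_cong') (auto simp: map_smult)
  also have "\<dots> = c \<odot>\<^bsub>fst M r\<^esub> dsum_eval q r a"
    unfolding dsum_eval_def using F c dsum_eval_summand_closed[OF qr a]
    by (subst Mr.finsum_smult_ldistr) auto
  finally show ?thesis .
qed

lemma linear_map_dsum_eval:
  assumes qr: "q \<le> r"
  shows "linear_map R (dsum_module R M q) (fst M r) (dsum_eval q r)"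
proof -
  interpret Mr: module R "fst M r" by (rule module_at)
  have "dsum_eval q r a \<in> carrier (fst M r)" if "a \<in> carrier (dsum_module R M q)" for a
    unfolding dsum_eval_def using dsum_eval_summand_closed[OF qr that]
    by (intro Mr.finsum_closed) (auto simp: dsum_supp_def)
  then show ?thesis
    unfolding linear_map_def using dsum_eval_add[OF qr] dsum_eval_smult[OF qr] by auto
qed

lemma dsum_eval_incl:
  assumes x: "x \<lless> q" and qr: "q \<le> r" and m: "m \<in> carrier (fst M x)"
  shows "dsum_eval q r (dsum_incl M q x m) = snd M x r m"
proof -
  interpret Mr: abelian_group "fst M r" by (rule abelian_group_at)
  have "dsum_supp q (dsum_incl M q x m) \<subseteq> {x}" unfolding dsum_supp_def dsum_incl_def by auto
  then have "dsum_eval q r (dsum_incl M q x m) = finsum (fst M r) (\<lambda>y. snd M y r (dsum_incl M q x m y)) {x}"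
    using dsum_eval_over_superset[OF qr dsum_incl_closed[OF x m]] x by simp
  also have "\<dots> = snd M x r m"
    using map_closed[OF way_below_le_imp_le[OF x qr] m] by (simp add: dsum_incl_def)
  finally show ?thesis .
qed

section \<open>Colimit modules\<close>

definition colim_generators :: "'p \<Rightarrow> ('p \<Rightarrow> 'm) set" where
  "colim_generators q =
     {dsum_incl M q x m \<ominus>\<^bsub>dsum_module R M q\<^esub> dsum_incl M q y (snd M x y m) | x y m.
        x \<lless> q \<and> y \<lless> q \<and> x \<le> y \<and> m \<in> carrier (fst M x)}"

lemma colim_generators_subset: "colim_generators q \<subseteq> carrier (dsum_module R M q)"
proof -
  interpret Dq: module R "dsum_module R M q" by (rule module_dsum)
  show ?thesis
    unfolding colim_generators_def using dsum_incl_closed map_closed by (auto intro!: Dq.minus_closed)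
qed

lemma colim_relations_eq:
  "colim_relations R M q = \<Inter>{H. submodule H R (dsum_module R M q) \<and> colim_generators q \<subseteq> H}"
  unfolding colim_relations_def colim_generators_def ..

lemma colim_relations_least:
  "submodule H R (dsum_module R M q) \<Longrightarrow> colim_generators q \<subseteq> H \<Longrightarrow> colim_relations R M q \<subseteq> H"
  unfolding colim_relations_eq by blast

lemma submodule_colim_relations: "submodule (colim_relations R M q) R (dsum_module R M q)"
proof -
  interpret Dq: module R "dsum_module R M q" by (rule module_dsum)
  let ?\<H> = "{H. submodule H R (dsum_module R M q) \<and> colim_generators q \<subseteq> H}"
  have sub: "submodule H R (dsum_module R M q)" if "H \<in> ?\<H>" for H
    using that by blast
  show ?thesis
    unfolding colim_relations_eq
  proof (rule Dq.submoduleI)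
    show "\<Inter>?\<H> \<subseteq> carrier (dsum_module R M q)"
      using Dq.carrier_is_submodule colim_generators_subset by blast
    show "\<zero>\<^bsub>dsum_module R M q\<^esub> \<in> \<Inter>?\<H>"
      using subgroup.one_closed[OF submodule.axioms(1)[OF sub]] by auto
    show "\<ominus>\<^bsub>dsum_module R M q\<^esub> a \<in> \<Inter>?\<H>" if "a \<in> \<Inter>?\<H>" for a
      using that Dq.submoduleE(3)[OF sub] by blast
    show "a \<oplus>\<^bsub>dsum_module R M q\<^esub> b \<in> \<Inter>?\<H>" if "a \<in> \<Inter>?\<H>" "b \<in> \<Inter>?\<H>" for a b
      using that Dq.submoduleE(5)[OF sub] by blast
    show "c \<odot>\<^bsub>dsum_module R M q\<^esub> a \<in> \<Inter>?\<H>" if "c \<in> carrier R" "a \<in> \<Inter>?\<H>" for c a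
      using that Dq.submoduleE(4)[OF sub] by blast
  qed
qed

lemma colim_relations_subset: "colim_relations R M q \<subseteq> carrier (dsum_module R M q)"
  using module.submoduleE(1)[OF module_dsum submodule_colim_relations] .

lemma colim_generator_in_relations:
  "x \<lless> q \<Longrightarrow> y \<lless> q \<Longrightarrow> x \<le> y \<Longrightarrow> m \<in> carrier (fst M x) \<Longrightarrow>
   dsum_incl M q x m \<ominus>\<^bsub>dsum_module R M q\<^esub> dsum_incl M q y (snd M x y m) \<in> colim_relations R M q"
  unfolding colim_relations_eq colim_generators_def by blast

lemma linear_map_colim_relations:
  assumes N: "module R N" and S: "submodule S R N" and f: "linear_map R (dsum_module R M q) N f"
    and gen: "\<And>x y m. x \<lless> q \<Longrightarrow> y \<lless> q \<Longrightarrow> x \<le> y \<Longrightarrow> m \<in> carrier (fst M x) \<Longrightarrow>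
      f (dsum_incl M q x m \<ominus>\<^bsub>dsum_module R M q\<^esub> dsum_incl M q y (snd M x y m)) \<in> S"
    and k: "k \<in> colim_relations R M q"
  shows "f k \<in> S"
proof -
  have "colim_generators q \<subseteq> {a \<in> carrier (dsum_module R M q). f a \<in> S}"
    using colim_generators_subset gen unfolding colim_generators_def by blast
  then have "colim_relations R M q \<subseteq> {a \<in> carrier (dsum_module R M q). f a \<in> S}"
    by (rule colim_relations_least[OF submodule_vimage[OF module_dsum N f S]])
  then show ?thesis using k by blast
qed

lemma dsum_eval_relations:
  assumes qr: "q \<le> r" and k: "k \<in> colim_relations R M q"
  shows "dsum_eval q r k = \<zero>\<^bsub>fst M r\<^esub>"
proof -
  interpret Mr: module R "fst M r" by (rule module_at)
  have "dsum_eval q r k \<in> {\<zero>\<^bsub>fst M r\<^esub>}"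
  proof (rule linear_map_colim_relations[OF module_at zero_submodule[OF module_at]
        linear_map_dsum_eval[OF qr] _ k])
    fix x y m assume x: "x \<lless> q" and y: "y \<lless> q" and xy: "x \<le> y" and m: "m \<in> carrier (fst M x)"
    have ym: "snd M x y m \<in> carrier (fst M y)" using map_closed[OF xy m] .
    have "dsum_eval q r (dsum_incl M q x m \<ominus>\<^bsub>dsum_module R M q\<^esub> dsum_incl M q y (snd M x y m))
        = snd M x r m \<ominus>\<^bsub>fst M r\<^esub> snd M y r (snd M x y m)"
      using linear_map_minus[OF linear_map_dsum_eval[OF qr] abelian_group_dsum abelian_group_at
          dsum_incl_closed[OF x m] dsum_incl_closed[OF y ym]]
        dsum_eval_incl[OF x qr m] dsum_eval_incl[OF y qr ym] by simp
    also have "\<dots> = \<zero>\<^bsub>fst M r\<^esub>"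
      using map_comp[OF xy way_below_le_imp_le[OF y qr] m] map_closed[OF way_below_le_imp_le[OF x qr] m]
      by (simp add: Mr.r_neg a_minus_def)
    finally show "dsum_eval q r (dsum_incl M q x m \<ominus>\<^bsub>dsum_module R M q\<^esub> dsum_incl M q y (snd M x y m))
        \<in> {\<zero>\<^bsub>fst M r\<^esub>}" by simp
  qed
  then show ?thesis by simp
qed

definition dsum_extend :: "'p \<Rightarrow> 'p \<Rightarrow> ('p \<Rightarrow> 'm) \<Rightarrow> ('p \<Rightarrow> 'm)" where
  "dsum_extend p q a = (\<lambda>x. if x \<lless> p then a x else if x \<lless> q then \<zero>\<^bsub>fst M x\<^esub> else undefined)"

lemma linear_map_dsum_extend:
  assumes pq: "p \<le> q"
  shows "linear_map R (dsum_module R M p) (dsum_module R M q) (dsum_extend p q)"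
proof -
  have below: "x \<lless> p \<Longrightarrow> x \<lless> q" for x using way_below_le_trans pq by blast
  show ?thesis
    unfolding linear_map_def
  proof (intro conjI ballI Pi_I)
    show "dsum_extend p q a \<in> carrier (dsum_module R M q)" if a: "a \<in> carrier (dsum_module R M p)" for a
    proof -
      have "dsum_supp q (dsum_extend p q a) \<subseteq> dsum_supp p a"
        unfolding dsum_supp_def dsum_extend_def by auto
      then show ?thesis
        using a below unfolding carrier_dsum_iff dsum_extend_def
        by (auto simp: abelian_monoid.zero_closed[OF abelian_monoid_at] intro: rev_finite_subset)
    qed
    show "dsum_extend p q (a \<oplus>\<^bsub>dsum_module R M p\<^esub> b)
        = dsum_extend p q a \<oplus>\<^bsub>dsum_module R M q\<^esub> dsum_extend p q b" for a b
      using below unfolding dsum_extend_def dsum_add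
      by (auto intro!: ext simp: abelian_monoid.l_zero[OF abelian_monoid_at]
          abelian_monoid.zero_closed[OF abelian_monoid_at])
    show "dsum_extend p q (c \<odot>\<^bsub>dsum_module R M p\<^esub> a) = c \<odot>\<^bsub>dsum_module R M q\<^esub> dsum_extend p q a"
      if "c \<in> carrier R" for c a
      using below that unfolding dsum_extend_def dsum_smult
      by (auto intro!: ext simp: module.smult_r_null[OF module_at])
  qed
qed

lemma dsum_extend_incl: "p \<le> q \<Longrightarrow> x \<lless> p \<Longrightarrow> dsum_extend p q (dsum_incl M p x m) = dsum_incl M q x m"
  using way_below_le_trans unfolding dsum_extend_def dsum_incl_def by (intro ext) auto

lemma dsum_extend_relations:
  assumes pq: "p \<le> q" and k: "k \<in> colim_relations R M p"
  shows "dsum_extend p q k \<in> colim_relations R M q"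
proof (rule linear_map_colim_relations[OF module_dsum submodule_colim_relations
      linear_map_dsum_extend[OF pq] _ k])
  fix x y m assume x: "x \<lless> p" and y: "y \<lless> p" and xy: "x \<le> y" and m: "m \<in> carrier (fst M x)"
  have ym: "snd M x y m \<in> carrier (fst M y)" using map_closed[OF xy m] .
  have "dsum_extend p q (dsum_incl M p x m \<ominus>\<^bsub>dsum_module R M p\<^esub> dsum_incl M p y (snd M x y m))
      = dsum_incl M q x m \<ominus>\<^bsub>dsum_module R M q\<^esub> dsum_incl M q y (snd M x y m)"
    using linear_map_minus[OF linear_map_dsum_extend[OF pq] abelian_group_dsum abelian_group_dsum
        dsum_incl_closed[OF x m] dsum_incl_closed[OF y ym]]
      dsum_extend_incl[OF pq x] dsum_extend_incl[OF pq y] by simp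
  also have "\<dots> \<in> colim_relations R M q"
    using colim_generator_in_relations way_below_le_trans[OF x pq] way_below_le_trans[OF y pq] xy m
    by blast
  finally show "dsum_extend p q (dsum_incl M p x m \<ominus>\<^bsub>dsum_module R M p\<^esub> dsum_incl M p y (snd M x y m))
      \<in> colim_relations R M q" .
qed

abbreviation colim_class :: "'p \<Rightarrow> ('p \<Rightarrow> 'm) \<Rightarrow> ('p \<Rightarrow> 'm) set" where
  "colim_class q a \<equiv> colim_relations R M q +>\<^bsub>dsum_module R M q\<^esub> a"

lemma carrier_colim_module:
  "carrier (colim_module R M q) = {colim_class q a | a. a \<in> carrier (dsum_module R M q)}"
  unfolding colim_module_def Let_def by simp

lemma colim_class_cases:
  assumes "A \<in> carrier (colim_module R M q)"
  obtains a where "a \<in> carrier (dsum_module R M q)" "A = colim_class q a"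
  using assms unfolding carrier_colim_module by blast

lemma colim_class_in_carrier: "a \<in> carrier (dsum_module R M q) \<Longrightarrow> colim_class q a \<in> carrier (colim_module R M q)"
  unfolding carrier_colim_module by blast

lemma colim_class_eqI:
  "a \<in> carrier (dsum_module R M q) \<Longrightarrow> b \<in> carrier (dsum_module R M q) \<Longrightarrow>
   a \<ominus>\<^bsub>dsum_module R M q\<^esub> b \<in> colim_relations R M q \<Longrightarrow> colim_class q a = colim_class q b"
  by (rule submodule_rcos_eqI[OF module_dsum submodule_colim_relations])

lemma colim_class_add:
  "a \<in> carrier (dsum_module R M q) \<Longrightarrow> b \<in> carrier (dsum_module R M q) \<Longrightarrow>
   colim_class q a \<oplus>\<^bsub>colim_module R M q\<^esub> colim_class q b = colim_class q (a \<oplus>\<^bsub>dsum_module R M q\<^esub> b)"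
  unfolding colim_module_def Let_def
  using submodule_rcos_add[OF module_dsum submodule_colim_relations] by simp

lemma colim_class_smult:
  "a \<in> carrier (dsum_module R M q) \<Longrightarrow> c \<in> carrier R \<Longrightarrow>
   c \<odot>\<^bsub>colim_module R M q\<^esub> colim_class q a = colim_class q (c \<odot>\<^bsub>dsum_module R M q\<^esub> a)"
  unfolding colim_module_def Let_def
  using submodule_rcos_smult[OF module_dsum submodule_colim_relations] by simp

lemma colim_map_class:
  assumes pq: "p \<le> q" and a: "a \<in> carrier (dsum_module R M p)"
  shows "colim_map R M p q (colim_class p a) = colim_class q (dsum_extend p q a)"
proof -
  have ext: "linear_map R (dsum_module R M p) (dsum_module R M q) (dsum_extend p q)"
    by (rule linear_map_dsum_extend[OF pq])
  have ext_a: "dsum_extend p q a \<in> carrier (dsum_module R M q)"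
    using ext a unfolding linear_map_def by blast
  have eq: "colim_class q (dsum_extend p q b) = colim_class q (dsum_extend p q a)"
    if b: "b \<in> colim_class p a" for b
  proof -
    obtain k where k: "k \<in> colim_relations R M p" and b_eq: "b = k \<oplus>\<^bsub>dsum_module R M p\<^esub> a"
      using b unfolding a_r_coset_def' by blast
    have "k \<in> carrier (dsum_module R M p)" using k colim_relations_subset by blast
    then have "dsum_extend p q b = dsum_extend p q k \<oplus>\<^bsub>dsum_module R M q\<^esub> dsum_extend p q a"
      using b_eq ext a unfolding linear_map_def by simp
    also have "\<dots> \<in> colim_class q (dsum_extend p q a)"
      using abelian_group.a_rcosI[OF abelian_group_dsum dsum_extend_relations[OF pq k] colim_relations_subset ext_a] .
    finally show ?thesis by (rule submodule_rcos_repr[OF module_dsum submodule_colim_relations ext_a])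
  qed
  have self: "a \<in> colim_class p a"
    by (rule submodule_rcos_self[OF module_dsum submodule_colim_relations a])
  show ?thesis
    unfolding colim_map_def dsum_extend_def[symmetric]
  proof (rule Union_eq_if_all_eq)
    show "B = colim_class q (dsum_extend p q a)"
      if "B \<in> {colim_class q (dsum_extend p q b) | b. b \<in> colim_class p a}" for B
      using that eq by auto
    show "colim_class q (dsum_extend p q a) \<in> {colim_class q (dsum_extend p q b) | b. b \<in> colim_class p a}"
      using self by blast
  qed
qed

definition colim_eval :: "'p \<Rightarrow> 'p \<Rightarrow> ('p \<Rightarrow> 'm) set \<Rightarrow> 'm" where
  "colim_eval p r A = dsum_eval p r (SOME a. a \<in> A)"

lemma colim_eval_class:
  assumes pr: "p \<le> r" and a: "a \<in> carrier (dsum_module R M p)"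
  shows "colim_eval p r (colim_class p a) = dsum_eval p r a"
proof -
  interpret Mr: module R "fst M r" by (rule module_at)
  have eval: "linear_map R (dsum_module R M p) (fst M r) (dsum_eval p r)"
    by (rule linear_map_dsum_eval[OF pr])
  let ?b = "SOME b. b \<in> colim_class p a"
  have "?b \<in> colim_class p a"
    by (rule someI[of "\<lambda>b. b \<in> colim_class p a", OF submodule_rcos_self[OF module_dsum submodule_colim_relations a]])
  then obtain k where k: "k \<in> colim_relations R M p" and b_eq: "?b = k \<oplus>\<^bsub>dsum_module R M p\<^esub> a"
    unfolding a_r_coset_def' by blast
  have "k \<in> carrier (dsum_module R M p)" using k colim_relations_subset by blast
  then have "dsum_eval p r ?b = dsum_eval p r k \<oplus>\<^bsub>fst M r\<^esub> dsum_eval p r a"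
    using b_eq eval a unfolding linear_map_def by simp
  also have "\<dots> = dsum_eval p r a"
    using dsum_eval_relations[OF pr k] eval a unfolding linear_map_def by (simp add: Pi_iff)
  finally show ?thesis unfolding colim_eval_def .
qed

lemma linear_map_colim_eval:
  assumes pr: "p \<le> r"
  shows "linear_map R (colim_module R M p) (fst M r) (colim_eval p r)"
  unfolding linear_map_def
proof (intro conjI ballI Pi_I)
  have eval: "linear_map R (dsum_module R M p) (fst M r) (dsum_eval p r)"
    by (rule linear_map_dsum_eval[OF pr])
  fix A assume "A \<in> carrier (colim_module R M p)"
  then obtain a where a: "a \<in> carrier (dsum_module R M p)" and A: "A = colim_class p a"
    by (rule colim_class_cases)
  show "colim_eval p r A \<in> carrier (fst M r)"
    using eval a unfolding A colim_eval_class[OF pr a] linear_map_def by blast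
  show "colim_eval p r (A \<oplus>\<^bsub>colim_module R M p\<^esub> B) = colim_eval p r A \<oplus>\<^bsub>fst M r\<^esub> colim_eval p r B"
    if B_carrier: "B \<in> carrier (colim_module R M p)" for B
  proof -
    obtain b where b: "b \<in> carrier (dsum_module R M p)" and B: "B = colim_class p b"
      using B_carrier by (rule colim_class_cases)
    have ab: "a \<oplus>\<^bsub>dsum_module R M p\<^esub> b \<in> carrier (dsum_module R M p)"
      using abelian_monoid.a_closed[OF abelian_group.axioms(1)[OF abelian_group_dsum] a b] .
    show ?thesis
      using eval a b unfolding A B colim_class_add[OF a b] colim_eval_class[OF pr ab]
        colim_eval_class[OF pr a] colim_eval_class[OF pr b] linear_map_def by blast
  qed
  show "colim_eval p r (c \<odot>\<^bsub>colim_module R M p\<^esub> A) = c \<odot>\<^bsub>fst M r\<^esub> colim_eval p r A"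
    if c: "c \<in> carrier R" for c
  proof -
    have ca: "c \<odot>\<^bsub>dsum_module R M p\<^esub> a \<in> carrier (dsum_module R M p)"
      using module.smult_closed[OF module_dsum c a] .
    show ?thesis
      using eval a c unfolding A colim_class_smult[OF a c] colim_eval_class[OF pr ca]
        colim_eval_class[OF pr a] linear_map_def by blast
  qed
qed

lemma dsum_eval_extend:
  assumes pq: "p \<le> q" and pr: "p \<le> r" and qs: "q \<le> s" and rs: "r \<le> s"
    and a: "a \<in> carrier (dsum_module R M p)"
  shows "dsum_eval q s (dsum_extend p q a) = snd M r s (dsum_eval p r a)"
proof (rule linear_maps_dsum_eqI[OF module_at _ _ _ a])
  show "linear_map R (dsum_module R M p) (fst M s) (\<lambda>a. dsum_eval q s (dsum_extend p q a))"
    by (rule linear_map_comp[OF linear_map_dsum_extend[OF pq] linear_map_dsum_eval[OF qs]])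
  show "linear_map R (dsum_module R M p) (fst M s) (\<lambda>a. snd M r s (dsum_eval p r a))"
    by (rule linear_map_comp[OF linear_map_dsum_eval[OF pr] linear_map_at[OF rs]])
  fix x m assume x: "x \<lless> p" and m: "m \<in> carrier (fst M x)"
  show "dsum_eval q s (dsum_extend p q (dsum_incl M p x m)) = snd M r s (dsum_eval p r (dsum_incl M p x m))"
    using dsum_extend_incl[OF pq x] dsum_eval_incl[OF way_below_le_trans[OF x pq] qs m]
      dsum_eval_incl[OF x pr m] map_comp[OF way_below_le_imp_le[OF x pr] rs m]
    by simp
qed

lemma colim_class_incl_dsum_eval:
  assumes pr: "p \<le> r" and rs: "r \<lless> s" and a: "a \<in> carrier (dsum_module R M p)"
  shows "colim_class s (dsum_incl M s r (dsum_eval p r a)) = colim_class s (dsum_extend p s a)"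
proof -
  interpret Ds: module R "dsum_module R M s" by (rule module_dsum)
  have ps: "p \<le> s" using order_trans[OF pr way_below_imp_le[OF rs]] .
  have incl: "linear_map R (dsum_module R M p) (dsum_module R M s) (\<lambda>a. dsum_incl M s r (dsum_eval p r a))"
    by (rule linear_map_comp[OF linear_map_dsum_eval[OF pr] linear_map_dsum_incl[OF rs]])
  have ext: "linear_map R (dsum_module R M p) (dsum_module R M s) (dsum_extend p s)"
    by (rule linear_map_dsum_extend[OF ps])
  have "dsum_incl M s r (dsum_eval p r a) \<ominus>\<^bsub>dsum_module R M s\<^esub> dsum_extend p s a \<in> colim_relations R M s"
  proof (rule linear_maps_dsum_congruent[OF module_dsum submodule_colim_relations incl ext _ a])
    fix x m assume x: "x \<lless> p" and m: "m \<in> carrier (fst M x)"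
    have xs: "x \<lless> s" using way_below_le_trans[OF x ps] .
    have xr: "x \<le> r" using way_below_le_imp_le[OF x pr] .
    have "dsum_incl M s r (dsum_eval p r (dsum_incl M p x m)) \<ominus>\<^bsub>dsum_module R M s\<^esub>
          dsum_extend p s (dsum_incl M p x m)
        = \<ominus>\<^bsub>dsum_module R M s\<^esub> (dsum_incl M s x m \<ominus>\<^bsub>dsum_module R M s\<^esub> dsum_incl M s r (snd M x r m))"
      using dsum_eval_incl[OF x pr m] dsum_extend_incl[OF ps x]
        dsum_incl_closed[OF xs m] dsum_incl_closed[OF rs map_closed[OF xr m]]
      by (simp add: Ds.minus_add Ds.minus_minus Ds.a_comm a_minus_def)
    also have "\<dots> \<in> colim_relations R M s"
      using Ds.submoduleE(3)[OF submodule_colim_relations colim_generator_in_relations[OF xs rs xr m]] .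
    finally show "dsum_incl M s r (dsum_eval p r (dsum_incl M p x m)) \<ominus>\<^bsub>dsum_module R M s\<^esub>
          dsum_extend p s (dsum_incl M p x m) \<in> colim_relations R M s" .
  qed
  then show ?thesis
    using incl ext a unfolding linear_map_def by (intro colim_class_eqI) auto
qed

end

section \<open>Interleaving with the limit, colimit and zero modules\<close>

lemma lim_module_add:
  "s \<oplus>\<^bsub>lim_module R M p\<^esub> u = (\<lambda>x. if p \<lless> x then s x \<oplus>\<^bsub>fst M x\<^esub> u x else undefined)"
  unfolding lim_module_def by simp

lemma lim_module_smult:
  "c \<odot>\<^bsub>lim_module R M p\<^esub> u = (\<lambda>x. if p \<lless> x then c \<odot>\<^bsub>fst M x\<^esub> u x else undefined)"
  unfolding lim_module_def by simp

lemma carrier_lim_module_iff: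
  "s \<in> carrier (lim_module R M p) \<longleftrightarrow>
   (\<forall>x. p \<lless> x \<longrightarrow> s x \<in> carrier (fst M x)) \<and>
   (\<forall>x y. p \<lless> x \<longrightarrow> x \<le> y \<longrightarrow> s y = snd M x y (s x)) \<and> (\<forall>x. \<not> p \<lless> x \<longrightarrow> s x = undefined)"
  unfolding lim_module_def by simp

locale pmod_shift = persistence_module R M
  for R :: "'k ring" and M :: "('p::order, 'k, 'm) pmod" +
  fixes t :: "'p \<Rightarrow> 'p"
  assumes translation_shift: "translation t" and way_below_shift: "x \<lless> t x"
begin

lemma shift_mono: "p \<le> q \<Longrightarrow> t p \<le> t q"
  using translation_shift unfolding translation_def mono_def by blast

lemma le_shift: "p \<le> t p"
  using translation_shift unfolding translation_def by blast

lemma way_below_shift_imp_le: "t p \<lless> x \<Longrightarrow> p \<le> x"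
  using order_trans[OF le_shift way_below_imp_le] .

definition to_lower :: "'p \<Rightarrow> 'm \<Rightarrow> 'p \<Rightarrow> 'm" where
  "to_lower p m = (\<lambda>x. if t p \<lless> x then snd M p x m else undefined)"

definition from_lower :: "'p \<Rightarrow> ('p \<Rightarrow> 'm) \<Rightarrow> 'm" where
  "from_lower p s = s (t p)"

lemma linear_map_to_lower: "linear_map R (fst M p) (lim_module R M (t p)) (to_lower p)"
  unfolding linear_map_def
proof (intro conjI ballI Pi_I)
  fix m assume m: "m \<in> carrier (fst M p)"
  show "to_lower p m \<in> carrier (lim_module R M (t p))"
    unfolding carrier_lim_module_iff
  proof (intro conjI allI impI)
    show "to_lower p m x \<in> carrier (fst M x)" if "t p \<lless> x" for x
      using that m map_closed way_below_shift_imp_le unfolding to_lower_def by simp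
    show "to_lower p m y = snd M x y (to_lower p m x)" if x: "t p \<lless> x" and xy: "x \<le> y" for x y
      using x way_below_le_trans[OF x xy] map_comp[OF way_below_shift_imp_le[OF x] xy m]
      unfolding to_lower_def by simp
    show "to_lower p m x = undefined" if "\<not> t p \<lless> x" for x
      using that unfolding to_lower_def by simp
  qed
  show "to_lower p (m \<oplus>\<^bsub>fst M p\<^esub> n) = to_lower p m \<oplus>\<^bsub>lim_module R M (t p)\<^esub> to_lower p n"
    if "n \<in> carrier (fst M p)" for n
    using m that unfolding lim_module_add to_lower_def
    by (intro ext) (simp add: map_add way_below_shift_imp_le)
next
  fix c m assume "c \<in> carrier R" "m \<in> carrier (fst M p)"
  then show "to_lower p (c \<odot>\<^bsub>fst M p\<^esub> m) = c \<odot>\<^bsub>lim_module R M (t p)\<^esub> to_lower p m"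
    unfolding lim_module_smult to_lower_def
    by (intro ext) (simp add: map_smult way_below_shift_imp_le)
qed

lemma is_pmorph_to_lower: "is_pmorph R M (pullback t (lower_pmod R M)) to_lower"
  unfolding is_pmorph_def pullback_def lower_pmod_def fst_conv snd_conv
proof (intro conjI allI impI ballI)
  show "linear_map R (fst M p) (lim_module R M (t p)) (to_lower p)" for p
    by (rule linear_map_to_lower)
  fix p q m assume pq: "p \<le> q" and m: "m \<in> carrier (fst M p)"
  have "to_lower q (snd M p q m) x = (if t q \<lless> x then to_lower p m x else undefined)" for x
  proof (cases "t q \<lless> x")
    case True
    then have "t p \<lless> x" using le_way_below_trans[OF shift_mono[OF pq]] by blast
    then show ?thesis
      using True map_comp[OF pq way_below_shift_imp_le[OF True] m] unfolding to_lower_def by simp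
  qed (simp add: to_lower_def)
  then show "to_lower q (snd M p q m) = (\<lambda>x. if t q \<lless> x then to_lower p m x else undefined)" ..
qed

lemma is_pmorph_from_lower: "is_pmorph R (lower_pmod R M) (pullback t M) from_lower"
  unfolding is_pmorph_def pullback_def lower_pmod_def fst_conv snd_conv
proof (intro conjI allI impI ballI)
  show "linear_map R (lim_module R M p) (fst M (t p)) (from_lower p)" for p
    unfolding linear_map_def from_lower_def lim_module_add lim_module_smult
    by (auto simp: Pi_iff carrier_lim_module_iff way_below_shift)
  fix p q s assume pq: "p \<le> q" and s: "s \<in> carrier (lim_module R M p)"
  have "s (t q) = snd M (t p) (t q) (s (t p))"
    using s way_below_shift shift_mono[OF pq] unfolding carrier_lim_module_iff by blast
  then show "from_lower q (\<lambda>x. if q \<lless> x then s x else undefined) = snd M (t p) (t q) (from_lower p s)"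
    unfolding from_lower_def by (simp add: way_below_shift)
qed

lemma from_lower_to_lower: "from_lower (t p) (to_lower p m) = snd M p (t (t p)) m"
  unfolding from_lower_def to_lower_def by (simp add: way_below_shift)

lemma to_lower_from_lower:
  assumes s: "s \<in> carrier (fst (lower_pmod R M) p)"
  shows "to_lower (t p) (from_lower p s) = snd (lower_pmod R M) p (t (t p)) s"
proof -
  have "snd M (t p) x (s (t p)) = s x" if "t (t p) \<lless> x" for x
    using s way_below_shift way_below_shift_imp_le[OF that]
    unfolding lower_pmod_def fst_conv carrier_lim_module_iff by (metis)
  then show ?thesis unfolding to_lower_def from_lower_def lower_pmod_def snd_conv by auto
qed

lemma interleaved_lower:
  assumes "T \<epsilon> = t"
  shows "interleaved R T \<epsilon> M (lower_pmod R M)"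
  unfolding interleaved_def assms
  using is_pmorph_to_lower is_pmorph_from_lower from_lower_to_lower to_lower_from_lower by blast

lemma interleaved_zero_if_ephemeral:
  assumes ephemeral: "ephemeral M" and "T \<epsilon> = t"
  shows "interleaved R T \<epsilon> M (zero_pmod :: ('p, 'k, unit) pmod)"
proof -
  define f where "f = (\<lambda>(p::'p) (m::'m). ())"
  define g where "g = (\<lambda>p (u::unit). \<zero>\<^bsub>fst M (t p)\<^esub>)"
  have "is_pmorph R M (pullback t (zero_pmod :: ('p, 'k, unit) pmod)) f"
    unfolding is_pmorph_def pullback_def zero_pmod_def linear_map_def f_def
    by (simp add: zero_module_def)
  moreover have "is_pmorph R (zero_pmod :: ('p, 'k, unit) pmod) (pullback t M) g"
    unfolding is_pmorph_def pullback_def zero_pmod_def linear_map_def g_def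
    using map_zero[OF shift_mono]
    by (auto simp: zero_module_def abelian_monoid.zero_closed[OF abelian_monoid_at]
        abelian_monoid.l_zero[OF abelian_monoid_at] module.smult_r_null[OF module_at])
  moreover have "g (t p) (f p m) = snd M p (t (t p)) m" if "m \<in> carrier (fst M p)" for p m
    using ephemeral that way_below_le_trans[OF way_below_shift le_shift]
    unfolding ephemeral_def f_def g_def by auto
  ultimately show ?thesis
    unfolding interleaved_def assms(2) by (auto simp: f_def zero_pmod_def)
qed

definition to_upper :: "'p \<Rightarrow> 'm \<Rightarrow> ('p \<Rightarrow> 'm) set" where
  "to_upper p m = colim_class (t p) (dsum_incl M (t p) p m)"

definition from_upper :: "'p \<Rightarrow> ('p \<Rightarrow> 'm) set \<Rightarrow> 'm" where
  "from_upper p A = colim_eval p (t p) A"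

lemma linear_map_to_upper: "linear_map R (fst M p) (colim_module R M (t p)) (to_upper p)"
proof -
  have incl: "linear_map R (fst M p) (dsum_module R M (t p)) (dsum_incl M (t p) p)"
    by (rule linear_map_dsum_incl[OF way_below_shift])
  have closed: "dsum_incl M (t p) p m \<in> carrier (dsum_module R M (t p))" if "m \<in> carrier (fst M p)" for m
    using incl that unfolding linear_map_def by blast
  show ?thesis
    unfolding linear_map_def to_upper_def
  proof (intro conjI ballI Pi_I)
    show "colim_class (t p) (dsum_incl M (t p) p m) \<in> carrier (colim_module R M (t p))"
      if "m \<in> carrier (fst M p)" for m
      using colim_class_in_carrier[OF closed[OF that]] .
    show "colim_class (t p) (dsum_incl M (t p) p (m \<oplus>\<^bsub>fst M p\<^esub> n))
        = colim_class (t p) (dsum_incl M (t p) p m) \<oplus>\<^bsub>colim_module R M (t p)\<^esub>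
          colim_class (t p) (dsum_incl M (t p) p n)"
      if "m \<in> carrier (fst M p)" "n \<in> carrier (fst M p)" for m n
      using colim_class_add[OF closed closed] incl that unfolding linear_map_def by simp
    show "colim_class (t p) (dsum_incl M (t p) p (c \<odot>\<^bsub>fst M p\<^esub> m))
        = c \<odot>\<^bsub>colim_module R M (t p)\<^esub> colim_class (t p) (dsum_incl M (t p) p m)"
      if "c \<in> carrier R" "m \<in> carrier (fst M p)" for c m
      using colim_class_smult[OF closed that(1)] incl that unfolding linear_map_def by simp
  qed
qed

lemma is_pmorph_to_upper: "is_pmorph R M (pullback t (upper_pmod R M)) to_upper"
  unfolding is_pmorph_def pullback_def upper_pmod_def fst_conv snd_conv
proof (intro conjI allI impI ballI)
  show "linear_map R (fst M p) (colim_module R M (t p)) (to_upper p)" for p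
    by (rule linear_map_to_upper)
  fix p q m assume pq: "p \<le> q" and m: "m \<in> carrier (fst M p)"
  have p_tq: "p \<lless> t q" using way_below_le_trans[OF way_below_shift shift_mono[OF pq]] .
  have "colim_map R M (t p) (t q) (to_upper p m) = colim_class (t q) (dsum_incl M (t q) p m)"
    unfolding to_upper_def
    using colim_map_class[OF shift_mono[OF pq] dsum_incl_closed[OF way_below_shift m]]
      dsum_extend_incl[OF shift_mono[OF pq] way_below_shift] by simp
  also have "\<dots> = to_upper q (snd M p q m)"
    unfolding to_upper_def
    using colim_generator_in_relations[OF p_tq way_below_shift pq m]
      dsum_incl_closed[OF p_tq m] dsum_incl_closed[OF way_below_shift map_closed[OF pq m]]
    by (intro colim_class_eqI)
  finally show "to_upper q (snd M p q m) = colim_map R M (t p) (t q) (to_upper p m)" ..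
qed

lemma is_pmorph_from_upper: "is_pmorph R (upper_pmod R M) (pullback t M) from_upper"
  unfolding is_pmorph_def pullback_def upper_pmod_def fst_conv snd_conv
proof (intro conjI allI impI ballI)
  show "linear_map R (colim_module R M p) (fst M (t p)) (from_upper p)" for p
    unfolding from_upper_def by (rule linear_map_colim_eval[OF le_shift])
  fix p q A assume pq: "p \<le> q" and A_carrier: "A \<in> carrier (colim_module R M p)"
  obtain a where a: "a \<in> carrier (dsum_module R M p)" and A: "A = colim_class p a"
    using A_carrier by (rule colim_class_cases)
  have ext_a: "dsum_extend p q a \<in> carrier (dsum_module R M q)"
    using linear_map_dsum_extend[OF pq] a unfolding linear_map_def by blast
  show "from_upper q (colim_map R M p q A) = snd M (t p) (t q) (from_upper p A)"
    unfolding from_upper_def A colim_map_class[OF pq a] colim_eval_class[OF le_shift ext_a]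
      colim_eval_class[OF le_shift a]
    by (rule dsum_eval_extend[OF pq le_shift le_shift shift_mono[OF pq] a])
qed

lemma from_upper_to_upper:
  "m \<in> carrier (fst M p) \<Longrightarrow> from_upper (t p) (to_upper p m) = snd M p (t (t p)) m"
  unfolding from_upper_def to_upper_def
  using colim_eval_class[OF le_shift dsum_incl_closed[OF way_below_shift]]
    dsum_eval_incl[OF way_below_shift le_shift]
  by simp

lemma to_upper_from_upper:
  assumes "A \<in> carrier (fst (upper_pmod R M) p)"
  shows "to_upper (t p) (from_upper p A) = snd (upper_pmod R M) p (t (t p)) A"
proof -
  obtain a where a: "a \<in> carrier (dsum_module R M p)" and A: "A = colim_class p a"
    using assms unfolding upper_pmod_def fst_conv by (rule colim_class_cases)
  have p_ttp: "p \<le> t (t p)" using order_trans[OF le_shift le_shift] .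
  show ?thesis
    unfolding to_upper_def from_upper_def A colim_eval_class[OF le_shift a] upper_pmod_def snd_conv
      colim_map_class[OF p_ttp a]
    by (rule colim_class_incl_dsum_eval[OF le_shift way_below_shift a])
qed

lemma interleaved_upper:
  assumes "T \<epsilon> = t"
  shows "interleaved R T \<epsilon> M (upper_pmod R M)"
  unfolding interleaved_def assms
  using is_pmorph_to_upper is_pmorph_from_upper from_upper_to_upper to_upper_from_upper by blast

end

theorem mainTheorem18:
  fixes R :: "'k ring"
    and T :: "real \<Rightarrow> 'p::order \<Rightarrow> 'p"
    and M :: "('p, 'k, 'm) pmod"
  assumes "cring R"
    and "continuous_poset TYPE('p)"
    and "\<forall>\<epsilon>\<ge>0. translation (T \<epsilon>) \<and> scott_continuous (T \<epsilon>)"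
    and "superlinear T"
    and "TR2 T"
    and "is_pmod R M"
  shows "interleaving_dist R T M (lower_pmod R M) = 0
       \<and> interleaving_dist R T M (upper_pmod R M) = 0
       \<and> (ephemeral M \<longrightarrow> interleaving_dist R T M (zero_pmod :: ('p, 'k, unit) pmod) = 0)"
proof -
  have shift: "pmod_shift R M (T \<epsilon>)" if "\<epsilon> > 0" for \<epsilon>
    using assms(1,3,5,6) that unfolding TR2_def
    by (intro pmod_shift.intro persistence_module.intro pmod_shift_axioms.intro) auto
  show ?thesis
    using pmod_shift.interleaved_lower[OF shift refl] pmod_shift.interleaved_upper[OF shift refl]
      pmod_shift.interleaved_zero_if_ephemeral[OF shift _ refl]
    by (auto intro!: interleaving_dist_eq_0I)
qed

end
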